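(* Let $0<p\leq 1$ be a fixed constant and let $G\sim G(n,p)$, with $n$ sufficiently large. Then with high probability there exists a partition $V(G)=V_1\cup\cdots\cup V_t$ into disjoint subsets such that for all $1\leq i\leq t$: (i) $G[V_i]$ is a clique; (ii) $|V_i|=\Theta(\ln^{1/3} n)$; (iii) $|V_i|$ is even for all $1\leq i\leq t-1$.
   Context: $G(n,p)$ is the binomial random graph on $n$ vertices with each edge present independently with probability $p$. "With high probability" means with probability tending to $1$ as $n\to\infty$. $G[S]$ denotes the subgraph induced on $S$. *)

theory Defs
  imports "HOL-Probability.Probability"
begin

text \<open>Binomial random graph G(n,p) on vertex set {0..<n}: a graph is represented by
  its edge indicator on the slots (i,j) with i<j<n; each slot is present independently
  with probability p.\<close>

definition edge_slots :: "nat \<Rightarrow> (nat \<times> nat) set" where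
  "edge_slots n = {(i, j). i < j \<and> j < n}"

definition gnp :: "nat \<Rightarrow> real \<Rightarrow> (nat \<times> nat \<Rightarrow> bool) pmf" where
  "gnp n p = Pi_pmf (edge_slots n) False (\<lambda>_. bernoulli_pmf p)"

definition adj :: "(nat \<times> nat \<Rightarrow> bool) \<Rightarrow> nat \<Rightarrow> nat \<Rightarrow> bool" where
  "adj G u v \<longleftrightarrow> u \<noteq> v \<and> G (min u v, max u v)"

definition is_clique :: "(nat \<times> nat \<Rightarrow> bool) \<Rightarrow> nat set \<Rightarrow> bool" where
  "is_clique G S \<longleftrightarrow> (\<forall>u\<in>S. \<forall>v\<in>S. u \<noteq> v \<longrightarrow> adj G u v)"

definition is_partition :: "nat \<Rightarrow> nat set list \<Rightarrow> bool" where
  "is_partition n Vs \<longleftrightarrow>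
     (\<forall>i<length Vs. Vs ! i \<noteq> {}) \<and>
     (\<forall>i<length Vs. \<forall>j<length Vs. i \<noteq> j \<longrightarrow> Vs ! i \<inter> Vs ! j = {}) \<and>
     \<Union>(set Vs) = {0..<n}"

end

theory Submission
  imports Defs "HOL-Real_Asymp.Real_Asymp"
begin

text \<open>Let \<open>k \<approx> ln n powr (1/3)\<close> and \<open>m \<approx> n powr (1/20)\<close>. Reserve \<open>4k\<^sup>2m\<^sup>1\<^sup>1 + 3\<close> groups of
  \<open>m\<^sup>4\<close> blocks of \<open>6k - 2\<close> vertices each. With high probability
  (a) every set of \<open>T = 4k\<^sup>2m\<^sup>1\<^sup>1\<close> vertices contains a \<open>2k\<close>-clique: it carries \<open>2k m\<^sup>2\<^sup>2\<close>
      pairwise edge-disjoint candidate \<open>2k\<close>-sets (lines in a grid), and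
  (b) for all vertices \<open>r, r'\<close> and every group avoiding them, some block of the group is a clique
      whose first \<open>2k - 1\<close> vertices are joined to \<open>r\<close> and next \<open>2k - 1\<close> vertices to \<open>r'\<close>.
  Both failure probabilities are union bounds over independent events of probability at most
  \<open>1 - p\<^bsup>36k\<^sup>2\<^esup> \<le> 1 - n powr (-1/100)\<close>.
  Given (a) and (b), greedily remove \<open>2k\<close>-cliques from the vertices outside the clique blocks until
  fewer than \<open>T\<close> remain. The leftover vertices are absorbed in pairs, each pair into a clique block
  of a fresh group, which together with the pair splits into three \<open>2k\<close>-cliques; a single last
  vertex and its block give cliques of sizes \<open>2k\<close> and \<open>4k - 1\<close>, the only odd part. All parts have
  between \<open>2k\<close> and \<open>6k\<close> vertices.\<close>

section \<open>Products of Bernoulli variables\<close>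

lemma prob_Pi_pmf_Int_independent:
  assumes "finite B" "finite C" "B \<inter> C = {}"
    and S1: "\<And>f g. (\<forall>x\<in>B. f x = g x) \<Longrightarrow> f \<in> S1 \<longleftrightarrow> g \<in> S1"
    and S2: "\<And>f g. (\<forall>x\<in>C. f x = g x) \<Longrightarrow> f \<in> S2 \<longleftrightarrow> g \<in> S2"
  shows "measure_pmf.prob (Pi_pmf (B \<union> C) d M) (S1 \<inter> S2)
    = measure_pmf.prob (Pi_pmf B d M) S1 * measure_pmf.prob (Pi_pmf C d M) S2"
proof -
  let ?M1 = "Pi_pmf B d M" and ?M2 = "Pi_pmf C d M"
  let ?h = "\<lambda>(f, g) x. if x \<in> B then f x else g x"
  have "?h -` (S1 \<inter> S2) = S1 \<times> S2"
  proof (rule set_eqI)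
    fix z :: "('a \<Rightarrow> 'b) \<times> ('a \<Rightarrow> 'b)"
    obtain f g where z: "z = (f, g)" by fastforce
    have "?h (f, g) \<in> S1 \<longleftrightarrow> f \<in> S1" by (rule S1) simp
    moreover have "?h (f, g) \<in> S2 \<longleftrightarrow> g \<in> S2" by (rule S2) (use assms(3) in auto)
    ultimately show "z \<in> ?h -` (S1 \<inter> S2) \<longleftrightarrow> z \<in> S1 \<times> S2" unfolding z by auto
  qed
  then have "measure_pmf.prob (Pi_pmf (B \<union> C) d M) (S1 \<inter> S2)
      = measure_pmf.prob (pair_pmf ?M1 ?M2) (S1 \<times> S2)"
    using Pi_pmf_union[OF assms(1-3), of d M] by (simp add: measure_map_pmf)
  also have "\<dots> = measure_pmf.prob (pair_pmf ?M1 ?M2) ((S1 \<inter> set_pmf ?M1) \<times> (S2 \<inter> set_pmf ?M2))"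
    by (subst measure_Int_set_pmf[symmetric]) (simp add: Times_Int_Times)
  also have "\<dots> = measure_pmf.prob ?M1 S1 * measure_pmf.prob ?M2 S2"
    by (subst measure_pmf_prob_product) (auto intro: countable_subset simp: measure_Int_set_pmf)
  finally show ?thesis .
qed

lemma prob_Pi_bernoulli_not_all_True:
  assumes "finite B" "0 \<le> p" "p \<le> 1"
  shows "measure_pmf.prob (Pi_pmf B False (\<lambda>_. bernoulli_pmf p)) {f. \<not> (\<forall>e\<in>B. f e)}
    = 1 - p ^ card B"
proof -
  have "measure_pmf.prob (Pi_pmf B False (\<lambda>_. bernoulli_pmf p)) (Pi B (\<lambda>_. {True})) = p ^ card B"
    using measure_Pi_pmf_Pi[of B False "\<lambda>_. bernoulli_pmf p" "\<lambda>_. {True}"] assms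
    by (simp add: measure_pmf_single)
  moreover have "{f. \<not> (\<forall>e\<in>B. f e)} = UNIV - Pi B (\<lambda>_. {True})" by (auto simp: Pi_def)
  ultimately show ?thesis
    using measure_pmf.prob_compl[of "Pi B (\<lambda>_. {True})"] by simp
qed

lemma prob_Pi_bernoulli_none_all_True_le:
  fixes E :: "'i \<Rightarrow> 'a set" and p :: real
  assumes "finite I" "finite A" "\<forall>l\<in>I. E l \<subseteq> A" "disjoint_family_on E I"
    "\<forall>l\<in>I. card (E l) \<le> M" "0 \<le> p" "p \<le> 1"
  shows "measure_pmf.prob (Pi_pmf A False (\<lambda>_. bernoulli_pmf p))
           {f. \<forall>l\<in>I. \<not> (\<forall>e\<in>E l. f e)} \<le> (1 - p ^ M) ^ card I"
  using assms
proof (induction I arbitrary: A rule: finite_induct)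
  case empty
  then show ?case by simp
next
  case (insert l I)
  let ?P = "\<lambda>X. Pi_pmf X False (\<lambda>_. bernoulli_pmf p)"
  have El: "E l \<subseteq> A" "finite (E l)" using insert.prems(1,2) finite_subset by auto
  have others: "E l' \<subseteq> A - E l" if "l' \<in> I" for l'
    using insert.prems(2,3) insert.hyps(2) that by (auto dest: disjoint_family_onD)
  define S1 where "S1 = {f. \<not> (\<forall>e\<in>E l. f e)}"
  define S2 where "S2 = {f. \<forall>l\<in>I. \<not> (\<forall>e\<in>E l. f e)}"
  have "f \<in> S2 \<longleftrightarrow> g \<in> S2" if eq: "\<forall>x\<in>A - E l. f x = g x" for f g
  proof -
    have "(\<forall>e\<in>E l'. f e) \<longleftrightarrow> (\<forall>e\<in>E l'. g e)" if "l' \<in> I" for l'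
      using eq others[OF that] by blast
    then show ?thesis unfolding S2_def by blast
  qed
  then have "measure_pmf.prob (?P (E l \<union> (A - E l))) (S1 \<inter> S2)
      = measure_pmf.prob (?P (E l)) S1 * measure_pmf.prob (?P (A - E l)) S2"
    by (intro prob_Pi_pmf_Int_independent) (use El(2) insert.prems(1) in \<open>auto simp: S1_def\<close>)
  moreover have "E l \<union> (A - E l) = A" using El by blast
  moreover have "{f. \<forall>l\<in>insert l I. \<not> (\<forall>e\<in>E l. f e)} = S1 \<inter> S2"
    unfolding S1_def S2_def by blast
  ultimately have "measure_pmf.prob (?P A) {f. \<forall>l\<in>insert l I. \<not> (\<forall>e\<in>E l. f e)}
      = measure_pmf.prob (?P (E l)) S1 * measure_pmf.prob (?P (A - E l)) S2"
    by simp
  also have "\<dots> \<le> (1 - p ^ M) * (1 - p ^ M) ^ card I"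
  proof (rule mult_mono)
    show "measure_pmf.prob (?P (E l)) S1 \<le> 1 - p ^ M"
      unfolding S1_def using prob_Pi_bernoulli_not_all_True[OF El(2)] power_decreasing[of "card (E l)" M p] insert.prems
      by simp
    show "measure_pmf.prob (?P (A - E l)) S2 \<le> (1 - p ^ M) ^ card I"
      unfolding S2_def by (rule insert.IH) (use insert.prems others in \<open>auto intro: disjoint_family_on_mono\<close>)
  qed (use insert.prems in \<open>auto simp: power_le_one\<close>)
  finally show ?case using insert.hyps by simp
qed

lemma measure_pmf_prob_UN_le:
  fixes b :: real
  assumes "finite I" "\<And>i. i \<in> I \<Longrightarrow> measure_pmf.prob M (E i) \<le> b"
  shows "measure_pmf.prob M (\<Union>i\<in>I. E i) \<le> card I * b"
proof -
  have "measure_pmf.prob M (\<Union>i\<in>I. E i) \<le> (\<Sum>i\<in>I. measure_pmf.prob M (E i))"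
    by (rule measure_pmf.finite_measure_subadditive_finite[OF assms(1)]) auto
  also have "\<dots> \<le> (\<Sum>i\<in>I. b)" by (rule sum_mono) (rule assms(2))
  finally show ?thesis by simp
qed

section \<open>Cliques and clique covers\<close>

definition edge_slots_in :: "nat set \<Rightarrow> (nat \<times> nat) set" where
  "edge_slots_in S = {(u, v). u \<in> S \<and> v \<in> S \<and> u < v}"

lemma edge_slots_in_subset: "S \<subseteq> {0..<n} \<Longrightarrow> edge_slots_in S \<subseteq> edge_slots n"
  unfolding edge_slots_in_def edge_slots_def by auto

lemma card_edge_slots_in_le: "finite S \<Longrightarrow> card (edge_slots_in S) \<le> card S ^ 2"
proof -
  assume "finite S"
  moreover have "edge_slots_in S \<subseteq> S \<times> S" unfolding edge_slots_in_def by auto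
  ultimately have "card (edge_slots_in S) \<le> card (S \<times> S)" by (intro card_mono) auto
  then show ?thesis by (simp add: card_cartesian_product power2_eq_square)
qed

lemma finite_edge_slots: "finite (edge_slots n)"
proof -
  have "edge_slots n \<subseteq> {..<n} \<times> {..<n}" unfolding edge_slots_def by auto
  then show ?thesis by (rule finite_subset) simp
qed

lemma adj_commute: "adj G u v = adj G v u"
  unfolding adj_def by (auto simp: min.commute max.commute)

lemma is_clique_subset: "is_clique G S \<Longrightarrow> T \<subseteq> S \<Longrightarrow> is_clique G T"
  unfolding is_clique_def by blast

lemma is_clique_if_edge_slots_in: "\<forall>e\<in>edge_slots_in S. G e \<Longrightarrow> is_clique G S"
proof -
  assume slots: "\<forall>e\<in>edge_slots_in S. G e"
  have "(min u v, max u v) \<in> edge_slots_in S" if "u \<in> S" "v \<in> S" "u \<noteq> v" for u v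
    using that unfolding edge_slots_in_def by (cases "u < v") (auto simp: min_def max_def)
  then show ?thesis using slots unfolding is_clique_def adj_def by blast
qed

lemma is_clique_insert:
  "is_clique G S \<Longrightarrow> \<forall>x\<in>S. adj G r x \<Longrightarrow> is_clique G (insert r S)"
  unfolding is_clique_def using adj_commute by blast

text \<open>The one odd member a clique cover may have becomes the last set of the partition.\<close>

definition clique_cover :: "(nat \<times> nat \<Rightarrow> bool) \<Rightarrow> nat \<Rightarrow> nat \<Rightarrow> nat set set \<Rightarrow> nat set \<Rightarrow> bool" where
  "clique_cover G lo hi F V \<longleftrightarrow> finite F \<and>
     (\<forall>X\<in>F. X \<noteq> {} \<and> is_clique G X \<and> lo \<le> card X \<and> card X \<le> hi) \<and>
     (\<forall>X\<in>F. \<forall>Y\<in>F. X \<noteq> Y \<longrightarrow> X \<inter> Y = {}) \<and> \<Union>F = V \<and>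
     (\<forall>X\<in>F. \<forall>Y\<in>F. odd (card X) \<longrightarrow> odd (card Y) \<longrightarrow> X = Y)"

lemma clique_cover_empty: "clique_cover G lo hi {} {}"
  unfolding clique_cover_def by auto

lemma clique_cover_singleton:
  "X \<noteq> {} \<Longrightarrow> is_clique G X \<Longrightarrow> lo \<le> card X \<Longrightarrow> card X \<le> hi \<Longrightarrow> clique_cover G lo hi {X} X"
  unfolding clique_cover_def by auto

lemma clique_cover_Un:
  assumes "clique_cover G lo hi F1 V1" "clique_cover G lo hi F2 V2" "V1 \<inter> V2 = {}"
    "\<forall>X\<in>F1. even (card X)"
  shows "clique_cover G lo hi (F1 \<union> F2) (V1 \<union> V2)"
proof -
  have "X \<inter> Y = {}" if "X \<in> F1" "Y \<in> F2" for X Y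
    using assms(1-3) that unfolding clique_cover_def by blast
  then have "\<forall>X\<in>F1 \<union> F2. \<forall>Y\<in>F1 \<union> F2. X \<noteq> Y \<longrightarrow> X \<inter> Y = {}"
    using assms(1,2) unfolding clique_cover_def by (metis Int_commute Un_iff)
  then show ?thesis using assms unfolding clique_cover_def by auto
qed

lemma clique_cover_imp_partition:
  assumes "clique_cover G lo hi F {0..<n}"
  shows "\<exists>Vs. is_partition n Vs \<and> (\<forall>i<length Vs. is_clique G (Vs ! i) \<and> lo \<le> card (Vs ! i) \<and>
     card (Vs ! i) \<le> hi \<and> (i < length Vs - 1 \<longrightarrow> even (card (Vs ! i))))"
proof -
  have finF: "finite F"
    and members: "\<forall>X\<in>F. X \<noteq> {} \<and> is_clique G X \<and> lo \<le> card X \<and> card X \<le> hi"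
    and disj: "\<forall>X\<in>F. \<forall>Y\<in>F. X \<noteq> Y \<longrightarrow> X \<inter> Y = {}" and covers: "\<Union>F = {0..<n}"
    and one_odd: "\<forall>X\<in>F. \<forall>Y\<in>F. odd (card X) \<longrightarrow> odd (card Y) \<longrightarrow> X = Y"
    using assms by (simp_all add: clique_cover_def)
  text \<open>List the members of \<open>F\<close>, putting the odd one (if any) last.\<close>
  obtain Vs where Vs: "set Vs = F" "distinct Vs"
    and even_init: "\<forall>i < length Vs - 1. even (card (Vs ! i))"
  proof (cases "\<exists>Z\<in>F. odd (card Z)")
    case True
    then obtain Z where Z: "Z \<in> F" "odd (card Z)" by blast
    obtain xs where xs: "set xs = F - {Z}" "distinct xs"
      using finite_distinct_list[of "F - {Z}"] finF by auto
    have "even (card ((xs @ [Z]) ! i))" if "i < length (xs @ [Z]) - 1" for i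
    proof -
      have "(xs @ [Z]) ! i = xs ! i" "i < length xs" using that by (simp_all add: nth_append)
      then have "(xs @ [Z]) ! i \<in> F - {Z}" using xs(1) nth_mem by metis
      then show ?thesis using one_odd Z by blast
    qed
    then show ?thesis using that[of "xs @ [Z]"] xs Z by auto
  next
    case False
    obtain xs where xs: "set xs = F" "distinct xs" using finite_distinct_list[OF finF] by blast
    moreover have "\<forall>i<length xs - 1. even (card (xs ! i))"
      using False xs(1) nth_mem by fastforce
    ultimately show ?thesis by (rule that)
  qed
  have "is_partition n Vs"
    unfolding is_partition_def
    using Vs members disj covers by (metis nth_eq_iff_index_eq nth_mem)
  then show ?thesis using Vs(1) members even_init by (metis nth_mem)
qed

definition cliques_in_large_sets :: "(nat \<times> nat \<Rightarrow> bool) \<Rightarrow> nat set \<Rightarrow> nat \<Rightarrow> nat \<Rightarrow> bool" where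
  "cliques_in_large_sets G U T s \<longleftrightarrow> (\<forall>W\<subseteq>U. T \<le> card W \<longrightarrow> (\<exists>C\<subseteq>W. card C = s \<and> is_clique G C))"

lemma cliques_in_large_sets_subset:
  "cliques_in_large_sets G U T s \<Longrightarrow> U' \<subseteq> U \<Longrightarrow> cliques_in_large_sets G U' T s"
  unfolding cliques_in_large_sets_def by blast

lemma greedy_even_clique_cover:
  assumes "finite U" "cliques_in_large_sets G U T s" "0 < s" "even s" "lo \<le> s" "s \<le> hi"
  shows "\<exists>F R. R \<subseteq> U \<and> card R < T \<and> clique_cover G lo hi F (U - R) \<and> (\<forall>X\<in>F. even (card X))"
  using assms(1,2)
proof (induction "card U" arbitrary: U rule: less_induct)
  case less
  show ?case
  proof (cases "card U < T")
    case True
    then show ?thesis using clique_cover_empty[of G lo hi] by (intro exI[of _ "{}"] exI[of _ U]) simp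
  next
    case False
    then obtain C where C: "C \<subseteq> U" "card C = s" "is_clique G C"
      using less.prems(2) unfolding cliques_in_large_sets_def by auto
    have "C \<noteq> {}" using C assms(3) by auto
    then have "card (U - C) < card U" using C(1) less.prems(1)
      by (intro psubset_card_mono) auto
    moreover have "cliques_in_large_sets G (U - C) T s"
      using less.prems(2) by (rule cliques_in_large_sets_subset) blast
    ultimately obtain F R where FR: "R \<subseteq> U - C" "card R < T" "clique_cover G lo hi F (U - C - R)"
      "\<forall>X\<in>F. even (card X)"
      using less.hyps less.prems(1) by (meson finite_Diff)
    have "clique_cover G lo hi {C} C" using clique_cover_singleton \<open>C \<noteq> {}\<close> C assms(5,6) by simp
    then have "clique_cover G lo hi ({C} \<union> F) (C \<union> (U - C - R))"
      by (rule clique_cover_Un[OF _ FR(3)]) (use C assms(4) in auto)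
    moreover have "C \<union> (U - C - R) = U - R" using C FR(1) by blast
    ultimately show ?thesis
      using FR C assms(4) by (intro exI[of _ "{C} \<union> F"] exI[of _ R]) auto
  qed
qed

section \<open>Blocks of absorbers\<close>

definition chunk :: "nat \<Rightarrow> nat \<Rightarrow> nat set" where
  "chunk d j = {j * d ..< j * d + d}"

lemma disjoint_chunk:
  assumes "j \<noteq> j'" shows "chunk d j \<inter> chunk d j' = {}"
proof -
  have step: "j * d + d \<le> j' * d" if "j < j'" for j j'
    using mult_le_mono1[of "Suc j" j' d] that by simp
  have ivl: "{a..<a + d} \<inter> {b..<b + d} = {}" if "a + d \<le> b \<or> b + d \<le> a" for a b
    using that by auto
  show ?thesis
    unfolding chunk_def using assms by (intro ivl) (meson step nat_neq_iff)
qed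

lemma chunk_subset: "j < J \<Longrightarrow> chunk d j \<subseteq> {0..<J * d}"
  unfolding chunk_def using mult_le_mono1[of "Suc j" J d] by auto

definition block_size :: "nat \<Rightarrow> nat" where
  "block_size k = 6 * k - 2"

definition block :: "nat \<Rightarrow> nat \<Rightarrow> nat set" where
  "block k = chunk (block_size k)"

definition block_left :: "nat \<Rightarrow> nat \<Rightarrow> nat set" where
  "block_left k j = {j * block_size k ..< j * block_size k + (2 * k - 1)}"

definition block_mid :: "nat \<Rightarrow> nat \<Rightarrow> nat set" where
  "block_mid k j = {j * block_size k + (2 * k - 1) ..< j * block_size k + (4 * k - 2)}"

definition block_right :: "nat \<Rightarrow> nat \<Rightarrow> nat set" where
  "block_right k j = {j * block_size k + (4 * k - 2) ..< j * block_size k + block_size k}"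

definition block_group :: "nat \<Rightarrow> nat \<Rightarrow> nat set" where
  "block_group g = chunk g"

definition group_vertices :: "nat \<Rightarrow> nat \<Rightarrow> nat \<Rightarrow> nat set" where
  "group_vertices k g i = \<Union> (block k ` block_group g i)"

lemma finite_block_parts [simp]:
  "finite (block k j)" "finite (block_left k j)" "finite (block_mid k j)" "finite (block_right k j)"
  unfolding block_def chunk_def block_left_def block_mid_def block_right_def by simp_all

lemma block_eq_parts:
  assumes "1 \<le> k"
  shows "block k j = block_left k j \<union> block_mid k j \<union> block_right k j"
    "block_mid k j \<union> block_right k j = {j * block_size k + (2 * k - 1) ..< j * block_size k + block_size k}"
  using assms unfolding block_def chunk_def block_left_def block_mid_def block_right_def block_size_def
  by auto

lemma block_parts:
  assumes "1 \<le> k"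
  shows "block_left k j \<subseteq> block k j" "block_mid k j \<subseteq> block k j" "block_right k j \<subseteq> block k j"
    "block_left k j \<inter> block_mid k j = {}" "block_left k j \<inter> block_right k j = {}"
    "block_mid k j \<inter> block_right k j = {}"
    "card (block_left k j) = 2 * k - 1" "card (block_mid k j) = 2 * k - 1"
    "card (block_right k j) = 2 * k" "card (block k j) = 6 * k - 2"
    "card (block_mid k j \<union> block_right k j) = 4 * k - 1"
proof -
  note eq = block_eq_parts[OF assms, of j]
  show "block_left k j \<subseteq> block k j" "block_mid k j \<subseteq> block k j" "block_right k j \<subseteq> block k j"
    using eq(1) by blast+
  show "block_left k j \<inter> block_mid k j = {}" "block_left k j \<inter> block_right k j = {}"
    "block_mid k j \<inter> block_right k j = {}"
    unfolding block_left_def block_mid_def block_right_def block_size_def using assms by auto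
  show "card (block_left k j) = 2 * k - 1" "card (block_mid k j) = 2 * k - 1"
    "card (block_right k j) = 2 * k" "card (block k j) = 6 * k - 2"
    unfolding block_left_def block_mid_def block_right_def block_def chunk_def block_size_def
    using assms by simp_all
  show "card (block_mid k j \<union> block_right k j) = 4 * k - 1"
    unfolding eq(2) block_size_def using assms by simp
qed

lemma disjoint_block: "j \<noteq> j' \<Longrightarrow> block k j \<inter> block k j' = {}"
  unfolding block_def by (rule disjoint_chunk)

lemma block_subset_group_vertices: "j \<in> block_group g i \<Longrightarrow> block k j \<subseteq> group_vertices k g i"
  unfolding group_vertices_def by blast

lemma block_in_range:
  assumes "i < N" "j \<in> block_group g i"
  shows "block k j \<subseteq> {0..<N * g * block_size k}"
proof -
  have "j < N * g" using chunk_subset[OF assms(1), of g] assms(2) unfolding block_group_def by auto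
  then show ?thesis unfolding block_def by (rule chunk_subset)
qed

lemma group_vertices_unique:
  assumes "r \<in> group_vertices k g i" "r \<in> group_vertices k g i'"
  shows "i = i'"
proof -
  obtain j j' where "j \<in> block_group g i" "j' \<in> block_group g i'" "r \<in> block k j" "r \<in> block k j'"
    using assms unfolding group_vertices_def by blast
  then show ?thesis
    using disjoint_block[of j j' k] disjoint_chunk[of i i' g] unfolding block_group_def by blast
qed

lemma exists_group_avoiding:
  assumes "finite I" "3 \<le> card I"
  shows "\<exists>i\<in>I. r \<notin> group_vertices k g i \<and> r' \<notin> group_vertices k g i"
proof (rule ccontr)
  define A where "A r = {i\<in>I. r \<in> group_vertices k g i}" for r
  have "card (A r) \<le> 1" for r
    using group_vertices_unique assms(1) unfolding A_def by (subst One_nat_def, subst card_le_Suc0_iff_eq) auto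
  assume "\<not> ?thesis"
  then have "I = A r \<union> A r'" unfolding A_def by blast
  then have "card I \<le> card (A r) + card (A r')" by (metis card_Un_le)
  then show False using assms(2) \<open>card (A r) \<le> 1\<close> \<open>card (A r') \<le> 1\<close> by linarith
qed

definition absorbing :: "(nat \<times> nat \<Rightarrow> bool) \<Rightarrow> nat \<Rightarrow> nat \<Rightarrow> nat \<Rightarrow> nat \<Rightarrow> bool" where
  "absorbing G k g n N \<longleftrightarrow> (\<forall>r<n. \<forall>r'<n. \<forall>i<N.
     r \<notin> group_vertices k g i \<longrightarrow> r' \<notin> group_vertices k g i \<longrightarrow>
     (\<exists>j\<in>block_group g i. is_clique G (block k j) \<and>
        (\<forall>x\<in>block_left k j. adj G r x) \<and> (\<forall>x\<in>block_mid k j. adj G r' x)))"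

lemma absorbing_imp_absorber:
  assumes "absorbing G k g n N" "finite I" "I \<subseteq> {..<N}" "3 \<le> card I" "r < n" "r' < n"
  shows "\<exists>i\<in>I. \<exists>j\<in>block_group g i. is_clique G (block k j) \<and>
    (\<forall>x\<in>block_left k j. adj G r x) \<and> (\<forall>x\<in>block_mid k j. adj G r' x)"
proof -
  obtain i where "i \<in> I" "r \<notin> group_vertices k g i" "r' \<notin> group_vertices k g i"
    using exists_group_avoiding[OF assms(2,4)] by blast
  then show ?thesis using assms(1,3,5,6) unfolding absorbing_def by blast
qed

lemma clique_cover_blocks:
  assumes k: "1 \<le> k" and "finite K" "\<forall>j\<in>K. is_clique G (block k j)"
  shows "clique_cover G (2 * k) (6 * k) (block k ` K) (\<Union>(block k ` K))"
    "\<forall>X\<in>block k ` K. even (card X)"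
proof -
  have card: "card (block k j) = 6 * k - 2" for j using block_parts(10)[OF k] .
  have "even (6 * k - 2)" using k by presburger
  then show even: "\<forall>X\<in>block k ` K. even (card X)" using card by simp
  have "block k j \<noteq> {}" for j using card[of j] k by auto
  then have "\<forall>X\<in>block k ` K. X \<noteq> {} \<and> is_clique G X \<and> 2 * k \<le> card X \<and> card X \<le> 6 * k"
    using card assms(3) k by auto
  moreover have "\<forall>X\<in>block k ` K. \<forall>Y\<in>block k ` K. X \<noteq> Y \<longrightarrow> X \<inter> Y = {}"
    using disjoint_block by (metis imageE)
  ultimately show "clique_cover G (2 * k) (6 * k) (block k ` K) (\<Union>(block k ` K))"
    unfolding clique_cover_def using assms(2) even by simp
qed

lemma absorb_one_vertex:
  assumes k: "1 \<le> k" and K: "finite K" "\<forall>j\<in>K. is_clique G (block k j)" "j \<in> K"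
    and r: "r \<notin> \<Union>(block k ` K)" "\<forall>x\<in>block_left k j. adj G r x"
  shows "\<exists>F. clique_cover G (2 * k) (6 * k) F (insert r (\<Union>(block k ` K)))"
proof -
  note parts = block_parts[OF k, of j]
  have clique: "is_clique G (block k j)" and rj: "r \<notin> block k j" using K(2,3) r(1) by auto
  define X1 where "X1 = insert r (block_left k j)"
  define X2 where "X2 = block_mid k j \<union> block_right k j"
  have card1: "card X1 = 2 * k"
    unfolding X1_def using rj parts(1,7) k by (subst card_insert_disjoint) auto
  have "is_clique G X1"
    unfolding X1_def by (rule is_clique_insert[OF is_clique_subset[OF clique parts(1)] r(2)])
  then have cover1: "clique_cover G (2 * k) (6 * k) {X1} X1"
    using card1 k by (intro clique_cover_singleton) (auto simp: X1_def)
  have "X2 \<noteq> {}" "is_clique G X2"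
    using parts(11) k is_clique_subset[OF clique, of X2] parts(2,3) unfolding X2_def by auto
  then have cover2: "clique_cover G (2 * k) (6 * k) {X2} X2"
    using parts(11) k by (intro clique_cover_singleton) (auto simp: X2_def)
  have "X1 \<inter> X2 = {}" unfolding X1_def X2_def using rj parts(1-6) by blast
  then have "clique_cover G (2 * k) (6 * k) ({X1} \<union> {X2}) (X1 \<union> X2)"
    using card1 by (intro clique_cover_Un[OF cover1 cover2]) auto
  moreover have "X1 \<union> X2 = insert r (block k j)"
    unfolding X1_def X2_def block_eq_parts(1)[OF k] by blast
  ultimately have pair: "clique_cover G (2 * k) (6 * k) ({X1} \<union> {X2}) (insert r (block k j))"
    by simp
  have "\<Union>(block k ` (K - {j})) \<inter> insert r (block k j) = {}"
    using r(1) disjoint_block[of _ j k] by auto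
  then have "clique_cover G (2 * k) (6 * k) (block k ` (K - {j}) \<union> ({X1} \<union> {X2}))
      (\<Union>(block k ` (K - {j})) \<union> insert r (block k j))"
    using clique_cover_blocks[OF k, of "K - {j}"] K by (intro clique_cover_Un[OF _ pair]) auto
  moreover have "\<Union>(block k ` (K - {j})) \<union> insert r (block k j) = insert r (\<Union>(block k ` K))"
    using K(3) by blast
  ultimately show ?thesis by metis
qed

lemma absorb_two_vertices:
  assumes k: "1 \<le> k" and cover: "clique_cover G (2 * k) (6 * k) F V"
    and clique: "is_clique G (block k j)" and "r \<noteq> r'"
    and r: "r \<notin> block k j" "\<forall>x\<in>block_left k j. adj G r x"
    and r': "r' \<notin> block k j" "\<forall>x\<in>block_mid k j. adj G r' x"
    and disj: "({r, r'} \<union> block k j) \<inter> V = {}"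
  shows "\<exists>F'. clique_cover G (2 * k) (6 * k) F' (({r, r'} \<union> block k j) \<union> V)"
proof -
  note parts = block_parts[OF k, of j]
  define T where "T = {insert r (block_left k j), insert r' (block_mid k j), block_right k j}"
  have "card (insert r (block_left k j)) = 2 * k"
    using r(1) parts(1,7) k by (subst card_insert_disjoint) auto
  moreover have "card (insert r' (block_mid k j)) = 2 * k"
    using r'(1) parts(2,8) k by (subst card_insert_disjoint) auto
  ultimately have cards: "\<forall>X\<in>T. card X = 2 * k" unfolding T_def using parts(9) by simp
  have "X \<noteq> {}" if "X \<in> T" for X using cards that k by fastforce
  moreover have "is_clique G X" if "X \<in> T" for X
    using that is_clique_subset[OF clique] parts(1-3) is_clique_insert r(2) r'(2)
    unfolding T_def by blast
  moreover have "\<forall>X\<in>T. \<forall>Y\<in>T. X \<noteq> Y \<longrightarrow> X \<inter> Y = {}"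
    unfolding T_def using \<open>r \<noteq> r'\<close> r(1) r'(1) parts(1-6) by blast
  moreover have "\<Union>T = {r, r'} \<union> block k j"
    unfolding T_def block_eq_parts(1)[OF k] by blast
  ultimately have "clique_cover G (2 * k) (6 * k) T ({r, r'} \<union> block k j)"
    unfolding clique_cover_def using cards by (simp add: T_def)
  from clique_cover_Un[OF this cover disj] cards show ?thesis by auto
qed

lemma clique_blocks_remove_group:
  assumes "\<forall>i\<in>I. \<forall>j\<in>block_group g i. is_clique G (block k j) \<longrightarrow> j \<in> K" "j \<in> block_group g i"
  shows "\<forall>i'\<in>I - {i}. \<forall>j'\<in>block_group g i'. is_clique G (block k j') \<longrightarrow> j' \<in> K - {j}"
proof (intro ballI impI)
  fix i' j' assume "i' \<in> I - {i}" "j' \<in> block_group g i'" "is_clique G (block k j')"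
  moreover have "j' \<noteq> j"
    using calculation(1,2) assms(2) disjoint_chunk[of i i' g] unfolding block_group_def by blast
  ultimately show "j' \<in> K - {j}" using assms(1) by blast
qed

text \<open>Leftover vertices are absorbed two at a time, each pair using a block of a fresh group; a
  single last vertex is absorbed alone, producing the one odd clique.\<close>

lemma absorb_leftover:
  assumes k: "1 \<le> k" and absorbing: "absorbing G k g n N"
  shows "finite R \<Longrightarrow> finite K \<Longrightarrow> R \<subseteq> {..<n} \<Longrightarrow> I \<subseteq> {..<N} \<Longrightarrow>
    R \<inter> \<Union>(block k ` K) = {} \<Longrightarrow>
    (\<forall>i\<in>I. \<forall>j\<in>block_group g i. is_clique G (block k j) \<longrightarrow> j \<in> K) \<Longrightarrow>
    (\<forall>j\<in>K. is_clique G (block k j)) \<Longrightarrow> card R + 3 \<le> card I \<Longrightarrow>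
    \<exists>F. clique_cover G (2 * k) (6 * k) F (R \<union> \<Union>(block k ` K))"
proof (induction "card R" arbitrary: R K I rule: less_induct)
  case less
  note finR = less.prems(1) and finK = less.prems(2) and Rn = less.prems(3) and IN = less.prems(4)
    and RK = less.prems(5) and IK = less.prems(6) and Kc = less.prems(7) and RI = less.prems(8)
  have finI: "finite I" using IN finite_subset by blast
  have absorber: "\<exists>i\<in>I. \<exists>j\<in>block_group g i. j \<in> K \<and> is_clique G (block k j) \<and>
        (\<forall>x\<in>block_left k j. adj G r x) \<and> (\<forall>x\<in>block_mid k j. adj G r' x)"
    if "r \<in> R" "r' \<in> R" for r r'
    using absorbing_imp_absorber[OF absorbing finI IN, of r r'] RI that Rn IK by fastforce
  consider "R = {}" | r where "R = {r}" | r r' where "r \<in> R" "r' \<in> R" "r \<noteq> r'"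
    by blast
  then show ?case
  proof cases
    case 1
    then show ?thesis using clique_cover_blocks(1)[OF k finK Kc] by auto
  next
    case (2 r)
    then obtain j where "j \<in> K" "\<forall>x\<in>block_left k j. adj G r x"
      using absorber[of r r] by blast
    moreover have "r \<notin> \<Union>(block k ` K)" using RK 2 by blast
    ultimately show ?thesis using absorb_one_vertex[OF k finK Kc] 2 by simp
  next
    case (3 r r')
    then obtain i j where ij: "i \<in> I" "j \<in> block_group g i" "j \<in> K" "is_clique G (block k j)"
      "\<forall>x\<in>block_left k j. adj G r x" "\<forall>x\<in>block_mid k j. adj G r' x"
      using absorber by blast
    have rr': "r \<notin> block k j" "r' \<notin> block k j" using RK 3 ij(3) by blast+
    define R' where "R' = R - {r, r'}"
    define K' where "K' = K - {j}"
    define I' where "I' = I - {i}"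
    have "card R' = card R - 2" "2 \<le> card R"
      unfolding R'_def using 3 finR card_mono[OF finR, of "{r, r'}"] by (auto simp: card_Diff_subset)
    moreover have "card I' = card I - 1" unfolding I'_def using ij(1) finI by simp
    ultimately have smaller: "card R' < card R" and "card R' + 3 \<le> card I'" using RI by auto
    have "\<forall>i'\<in>I'. \<forall>j'\<in>block_group g i'. is_clique G (block k j') \<longrightarrow> j' \<in> K'"
      unfolding I'_def K'_def by (rule clique_blocks_remove_group[OF IK ij(2)])
    moreover have "R' \<inter> \<Union>(block k ` K') = {}" using RK unfolding R'_def K'_def by blast
    moreover have "finite R'" "finite K'" "R' \<subseteq> {..<n}" "I' \<subseteq> {..<N}" "\<forall>j\<in>K'. is_clique G (block k j)"
      unfolding R'_def K'_def I'_def using finR finK Rn IN Kc by auto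
    ultimately obtain F' where F': "clique_cover G (2 * k) (6 * k) F' (R' \<union> \<Union>(block k ` K'))"
      using less.hyps[OF smaller] \<open>card R' + 3 \<le> card I'\<close> by blast
    have "\<Union>(block k ` K') \<inter> block k j = {}"
      using disjoint_block[of _ j k] unfolding K'_def by auto
    then have "({r, r'} \<union> block k j) \<inter> (R' \<union> \<Union>(block k ` K')) = {}"
      using RK 3 ij(3) unfolding R'_def K'_def by blast
    then obtain F where "clique_cover G (2 * k) (6 * k) F
        (({r, r'} \<union> block k j) \<union> (R' \<union> \<Union>(block k ` K')))"
      using absorb_two_vertices[OF k F' ij(4) 3(3) rr'(1) ij(5) rr'(2) ij(6)] by blast
    moreover have "({r, r'} \<union> block k j) \<union> (R' \<union> \<Union>(block k ` K')) = R \<union> \<Union>(block k ` K)"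
      using 3 ij(3) unfolding R'_def K'_def by blast
    ultimately show ?thesis by metis
  qed
qed

lemma clique_cover_exists:
  assumes k: "1 \<le> k"
    and cliques: "cliques_in_large_sets G {0..<n} T (2 * k)"
    and absorbing: "absorbing G k g n N" and "T + 3 \<le> N" and "N * g * block_size k \<le> n"
  shows "\<exists>F. clique_cover G (2 * k) (6 * k) F {0..<n}"
proof -
  define J where "J = {j. j < N * g \<and> is_clique G (block k j)}"
  define BV where "BV = \<Union>(block k ` J)"
  have "block k j \<subseteq> {0..<n}" if "j \<in> J" for j
    using that chunk_subset[of j "N * g" "block_size k"] assms(5)
    unfolding J_def block_def by auto
  then have BV: "BV \<subseteq> {0..<n}" unfolding BV_def by blast
  define U where "U = {0..<n} - BV"
  have "cliques_in_large_sets G U T (2 * k)"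
    using cliques by (rule cliques_in_large_sets_subset) (simp add: U_def)
  then obtain F1 R where FR: "R \<subseteq> U" "card R < T" "clique_cover G (2 * k) (6 * k) F1 (U - R)"
      "\<forall>X\<in>F1. even (card X)"
    using greedy_even_clique_cover[of U G T "2 * k" "2 * k" "6 * k"] k by (auto simp: U_def)
  have "\<exists>F. clique_cover G (2 * k) (6 * k) F (R \<union> BV)"
    unfolding BV_def
  proof (rule absorb_leftover[OF k absorbing])
    show "finite R" using FR(1) finite_subset unfolding U_def by blast
    show "finite J" unfolding J_def by simp
    show "R \<subseteq> {..<n}" "R \<inter> \<Union>(block k ` J) = {}" using FR(1) unfolding U_def BV_def by auto
    show "\<forall>i\<in>{..<N}. \<forall>j\<in>block_group g i. is_clique G (block k j) \<longrightarrow> j \<in> J"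
      using chunk_subset[of _ N g] unfolding J_def block_group_def by fastforce
    show "\<forall>j\<in>J. is_clique G (block k j)" unfolding J_def by simp
    show "card R + 3 \<le> card {..<N}" using FR(2) assms(4) by simp
  qed simp
  then obtain F2 where F2: "clique_cover G (2 * k) (6 * k) F2 (R \<union> BV)" by blast
  have "clique_cover G (2 * k) (6 * k) (F1 \<union> F2) ((U - R) \<union> (R \<union> BV))"
    by (rule clique_cover_Un[OF FR(3) F2 _ FR(4)]) (auto simp: U_def)
  moreover have "(U - R) \<union> (R \<union> BV) = {0..<n}" using FR(1) BV unfolding U_def by blast
  ultimately show ?thesis by metis
qed

section \<open>Edge-disjoint candidate cliques in a large set\<close>

text \<open>Arrange \<open>P * s\<close> points in \<open>s\<close> columns of height \<open>P\<close>. The line with offset \<open>c\<close> and slope \<open>d\<close>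
  takes row \<open>(c + d i) mod P\<close> in column \<open>i\<close>; when \<open>D * s \<le> P\<close>, lines with slopes below \<open>D\<close> meet
  in at most one point, so their vertex sets share no pair.\<close>

definition line_point :: "nat \<Rightarrow> nat \<Rightarrow> nat \<Rightarrow> nat \<Rightarrow> nat" where
  "line_point P c d i = (c + d * i) mod P + P * i"

lemma line_point_lt: "0 < P \<Longrightarrow> i < s \<Longrightarrow> line_point P c d i < P * s"
proof -
  assume "0 < P" "i < s"
  then have "line_point P c d i < P * (i + 1)" unfolding line_point_def by simp
  also have "\<dots> \<le> P * s" using \<open>i < s\<close> by (intro mult_le_mono2) simp
  finally show ?thesis .
qed

lemma line_point_div: "0 < P \<Longrightarrow> line_point P c d i div P = i"
  unfolding line_point_def by simp

lemma line_point_mod: "0 < P \<Longrightarrow> line_point P c d i mod P = (c + d * i) mod P"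
  unfolding line_point_def by simp

lemma dvd_small_int_eq_0:
  fixes P x :: int
  assumes "P dvd x" "\<bar>x\<bar> < P" shows "x = 0"
proof (rule ccontr)
  assume "x \<noteq> 0"
  then have "\<bar>P\<bar> \<le> \<bar>x\<bar>" using assms(1) dvd_imp_le_int by blast
  then show False using assms(2) by simp
qed

lemma distinct_lines_meet_once:
  assumes P: "0 < P" "D * s \<le> P" and cd: "c < P" "c' < P" "d < D" "d' < D"
    and ne: "(c, d) \<noteq> (c', d')" and i: "i1 < s" "i2 < s"
    and e1: "line_point P c d i1 = line_point P c' d' j1"
    and e2: "line_point P c d i2 = line_point P c' d' j2"
  shows "i1 = i2"
proof (rule ccontr)
  assume neq: "i1 \<noteq> i2"
  have "i1 = j1" "i2 = j2" using line_point_div[OF P(1)] e1 e2 by metis+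
  then have m1: "(c + d * i1) mod P = (c' + d' * i1) mod P"
    and m2: "(c + d * i2) mod P = (c' + d' * i2) mod P"
    using line_point_mod[OF P(1)] e1 e2 by metis+
  have z1: "int P dvd (int c - int c') + (int d - int d') * int i1"
    using m1 by (simp add: mod_eq_dvd_iff[symmetric] zmod_int[symmetric] algebra_simps)
      (metis of_nat_add of_nat_mult zmod_int)
  have z2: "int P dvd (int c - int c') + (int d - int d') * int i2"
    using m2 by (simp add: mod_eq_dvd_iff[symmetric] zmod_int[symmetric] algebra_simps)
      (metis of_nat_add of_nat_mult zmod_int)
  have "int P dvd ((int c - int c') + (int d - int d') * int i1)
      - ((int c - int c') + (int d - int d') * int i2)"
    using z1 z2 by (rule dvd_diff)
  then have z3: "int P dvd (int d - int d') * (int i1 - int i2)" by (simp add: algebra_simps)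
  have b: "\<bar>int d - int d'\<bar> < int D" "\<bar>int i1 - int i2\<bar> < int s" using cd i by auto
  have "\<bar>(int d - int d') * (int i1 - int i2)\<bar> = \<bar>int d - int d'\<bar> * \<bar>int i1 - int i2\<bar>"
    by (simp add: abs_mult)
  also have "\<dots> < int D * int s" by (rule mult_strict_mono[OF b]) (use b in auto)
  also have "\<dots> \<le> int P" using P(2) by (metis of_nat_le_iff of_nat_mult)
  finally have "(int d - int d') * (int i1 - int i2) = 0" using dvd_small_int_eq_0[OF z3] by simp
  then have "d = d'" using neq by simp
  then have "int P dvd int c - int c'" using z1 by simp
  moreover have "\<bar>int c - int c'\<bar> < int P" using cd by auto
  ultimately have "c = c'" using dvd_small_int_eq_0 by fastforce
  then show False using ne \<open>d = d'\<close> by simp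
qed

definition line_points :: "nat \<Rightarrow> nat \<Rightarrow> nat \<times> nat \<Rightarrow> nat set" where
  "line_points P s l = line_point P (fst l) (snd l) ` {..<s}"

lemma line_points_subset: "0 < P \<Longrightarrow> line_points P s l \<subseteq> {0..<P * s}"
  unfolding line_points_def using line_point_lt by fastforce

lemma card_line_points: "0 < P \<Longrightarrow> card (line_points P s l) = s"
proof -
  assume "0 < P"
  then have "inj_on (line_point P (fst l) (snd l)) {..<s}"
    by (intro inj_onI) (metis line_point_div)
  then show ?thesis unfolding line_points_def by (simp add: card_image)
qed

lemma line_points_meet_once:
  assumes "0 < P" "D * s \<le> P" "l \<in> {..<P} \<times> {..<D}" "l' \<in> {..<P} \<times> {..<D}" "l \<noteq> l'"
    and "u \<in> line_points P s l \<inter> line_points P s l'" "v \<in> line_points P s l \<inter> line_points P s l'"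
  shows "u = v"
proof -
  obtain i1 i2 j1 j2 where ij: "i1 < s" "i2 < s"
    "u = line_point P (fst l) (snd l) i1" "v = line_point P (fst l) (snd l) i2"
    "line_point P (fst l) (snd l) i1 = line_point P (fst l') (snd l') j1"
    "line_point P (fst l) (snd l) i2 = line_point P (fst l') (snd l') j2"
    using assms(6,7) unfolding line_points_def by auto
  have "i1 = i2"
    by (rule distinct_lines_meet_once[OF assms(1,2) _ _ _ _ _ ij(1,2,5,6)])
      (use assms(3-5) in \<open>auto simp: prod_eq_iff\<close>)
  then show ?thesis using ij(3,4) by simp
qed

lemma edge_disjoint_subsets:
  assumes "finite W" "0 < P" "P * s \<le> card W" "D * s \<le> P"
  shows "\<exists>C. (\<forall>l\<in>{..<P} \<times> {..<D}. C l \<subseteq> W \<and> card (C l) = s) \<and>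
    disjoint_family_on (\<lambda>l. edge_slots_in (C l)) ({..<P} \<times> {..<D})"
proof -
  obtain h where h: "bij_betw h {0..<card W} W" using ex_bij_betw_nat_finite[OF assms(1)] by blast
  have sub: "line_points P s l \<subseteq> {0..<card W}" for l
    using line_points_subset[OF assms(2)] assms(3) by fastforce
  have inj: "inj_on h {0..<card W}" using h bij_betw_imp_inj_on by blast
  have "h ` line_points P s l \<subseteq> W" for l using sub h bij_betw_imp_surj_on by (metis image_mono)
  moreover have "card (h ` line_points P s l) = s" for l
    using card_line_points[OF assms(2)] inj_on_subset[OF inj sub] by (simp add: card_image)
  moreover have "edge_slots_in (h ` line_points P s l) \<inter> edge_slots_in (h ` line_points P s l') = {}"
    if l: "l \<in> {..<P} \<times> {..<D}" "l' \<in> {..<P} \<times> {..<D}" "l \<noteq> l'" for l l'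
  proof (rule ccontr)
    assume "edge_slots_in (h ` line_points P s l) \<inter> edge_slots_in (h ` line_points P s l') \<noteq> {}"
    then obtain u v where "u \<in> h ` line_points P s l \<inter> h ` line_points P s l'"
      "v \<in> h ` line_points P s l \<inter> h ` line_points P s l'" "u < v"
      unfolding edge_slots_in_def by auto
    moreover have "h ` line_points P s l \<inter> h ` line_points P s l'
        = h ` (line_points P s l \<inter> line_points P s l')"
      using inj_on_image_Int[OF inj sub sub] by simp
    ultimately show False using line_points_meet_once[OF assms(2,4) l] by auto
  qed
  ultimately show ?thesis
    unfolding disjoint_family_on_def by (intro exI[of _ "\<lambda>l. h ` line_points P s l"]) blast
qed

section \<open>Failure probabilities\<close>

lemma prob_no_clique_in_set_le:
  assumes p: "0 \<le> p" "p \<le> 1" and W: "W \<subseteq> {0..<n}" "P * s \<le> card W" and "0 < P" "D * s \<le> P"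
  shows "measure_pmf.prob (gnp n p) {G. \<forall>C\<subseteq>W. card C = s \<longrightarrow> \<not> is_clique G C}
    \<le> (1 - p ^ s\<^sup>2) ^ (P * D)"
proof -
  let ?L = "{..<P} \<times> {..<D}"
  have "finite W" using W(1) finite_subset by blast
  then obtain C where C: "\<forall>l\<in>?L. C l \<subseteq> W \<and> card (C l) = s"
    and disj: "disjoint_family_on (\<lambda>l. edge_slots_in (C l)) ?L"
    using edge_disjoint_subsets assms(5,6) W(2) by blast
  have "{G. \<forall>C\<subseteq>W. card C = s \<longrightarrow> \<not> is_clique G C}
      \<subseteq> {G. \<forall>l\<in>?L. \<not> (\<forall>e\<in>edge_slots_in (C l). G e)}"
    using C is_clique_if_edge_slots_in by blast
  then have "measure_pmf.prob (gnp n p) {G. \<forall>C\<subseteq>W. card C = s \<longrightarrow> \<not> is_clique G C}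
      \<le> measure_pmf.prob (gnp n p) {G. \<forall>l\<in>?L. \<not> (\<forall>e\<in>edge_slots_in (C l). G e)}"
    by (intro measure_pmf.finite_measure_mono) auto
  also have "\<dots> \<le> (1 - p ^ s\<^sup>2) ^ card ?L"
    unfolding gnp_def
  proof (rule prob_Pi_bernoulli_none_all_True_le[OF _ finite_edge_slots _ disj _ p])
    show "\<forall>l\<in>?L. edge_slots_in (C l) \<subseteq> edge_slots n"
      using C W(1) edge_slots_in_subset by (meson subset_trans)
    show "\<forall>l\<in>?L. card (edge_slots_in (C l)) \<le> s\<^sup>2"
      using C card_edge_slots_in_le \<open>finite W\<close> by (metis finite_subset)
  qed simp
  finally show ?thesis by (simp add: card_cartesian_product)
qed

lemma prob_not_cliques_in_large_sets_le:
  assumes p: "0 \<le> p" "p \<le> 1" and "0 < P" "D * s \<le> P"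
  shows "measure_pmf.prob (gnp n p) {G. \<not> cliques_in_large_sets G {0..<n} (P * s) s}
    \<le> 2 ^ n * (1 - p ^ s\<^sup>2) ^ (P * D)"
proof -
  define Ws where "Ws = {W. W \<subseteq> {0..<n} \<and> P * s \<le> card W}"
  have "Ws \<subseteq> Pow {0..<n}" unfolding Ws_def by auto
  then have "finite Ws" "card Ws \<le> 2 ^ n" using card_mono[of "Pow {0..<n}" Ws]
    by (auto intro: finite_subset simp: card_Pow)
  have "{G. \<not> cliques_in_large_sets G {0..<n} (P * s) s}
      = (\<Union>W\<in>Ws. {G. \<forall>C\<subseteq>W. card C = s \<longrightarrow> \<not> is_clique G C})"
    unfolding cliques_in_large_sets_def Ws_def by blast
  also have "measure_pmf.prob (gnp n p) \<dots> \<le> card Ws * (1 - p ^ s\<^sup>2) ^ (P * D)"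
    using prob_no_clique_in_set_le[OF p _ _ assms(3,4)] \<open>finite Ws\<close>
    by (intro measure_pmf_prob_UN_le) (auto simp: Ws_def)
  also have "\<dots> \<le> 2 ^ n * (1 - p ^ s\<^sup>2) ^ (P * D)"
    using \<open>card Ws \<le> 2 ^ n\<close> p by (intro mult_right_mono) (auto simp: power_le_one)
  finally show ?thesis .
qed

definition absorber_slots :: "nat \<Rightarrow> nat \<Rightarrow> nat \<Rightarrow> nat \<Rightarrow> (nat \<times> nat) set" where
  "absorber_slots k r r' j = edge_slots_in (block k j) \<union>
     (\<lambda>x. (min r x, max r x)) ` block_left k j \<union> (\<lambda>x. (min r' x, max r' x)) ` block_mid k j"

lemma absorber_slots_endpoints:
  assumes "1 \<le> k" "e \<in> absorber_slots k r r' j"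
  shows "fst e \<in> block k j \<or> snd e \<in> block k j"
    "fst e \<in> insert r (insert r' (block k j))" "snd e \<in> insert r (insert r' (block k j))"
proof -
  note parts = block_parts(1,2)[OF assms(1), of j]
  consider u v where "u \<in> block k j" "v \<in> block k j" "e = (u, v)"
    | x where "x \<in> block k j" "e = (min r x, max r x)"
    | x where "x \<in> block k j" "e = (min r' x, max r' x)"
    using assms(2) parts unfolding absorber_slots_def edge_slots_in_def by blast
  note shapes = this
  show "fst e \<in> block k j \<or> snd e \<in> block k j"
    using shapes by cases (auto simp: min_def max_def)
  show "fst e \<in> insert r (insert r' (block k j))"
    using shapes by cases (auto simp: min_def max_def)
  show "snd e \<in> insert r (insert r' (block k j))"
    using shapes by cases (auto simp: min_def max_def)
qed

lemma disjoint_absorber_slots: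
  assumes "1 \<le> k" "j \<noteq> j'" "r \<notin> block k j" "r' \<notin> block k j" "r \<notin> block k j'" "r' \<notin> block k j'"
  shows "absorber_slots k r r' j \<inter> absorber_slots k r r' j' = {}"
proof -
  have "False" if "e \<in> absorber_slots k r r' j" "e \<in> absorber_slots k r r' j'" for e
    using absorber_slots_endpoints[OF assms(1) that(1)] absorber_slots_endpoints[OF assms(1) that(2)]
      disjoint_block[OF assms(2), of k] assms(3-6) by blast
  then show ?thesis by blast
qed

lemma card_absorber_slots_le:
  assumes "1 \<le> k"
  shows "card (absorber_slots k r r' j) \<le> (6 * k)\<^sup>2"
proof -
  define S where "S = insert r (insert r' (block k j))"
  have "absorber_slots k r r' j \<subseteq> S \<times> S"
  proof
    fix e assume "e \<in> absorber_slots k r r' j"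
    then show "e \<in> S \<times> S"
      using absorber_slots_endpoints(2,3)[OF assms] unfolding mem_Times_iff S_def by blast
  qed
  then have "card (absorber_slots k r r' j) \<le> card S * card S"
    by (metis S_def card_cartesian_product card_mono finite_SigmaI finite_block_parts(1) finite_insert)
  moreover have "card S \<le> 6 * k"
    using block_parts(10)[OF assms, of j] assms unfolding S_def by (auto simp: card_insert_if)
  ultimately show ?thesis by (metis mult_le_mono power2_eq_square order_trans)
qed

lemma absorber_slots_subset_edge_slots:
  assumes k: "1 \<le> k" and "block k j \<subseteq> {0..<n}" "r < n" "r' < n" "r \<notin> block k j" "r' \<notin> block k j"
  shows "absorber_slots k r r' j \<subseteq> edge_slots n"
proof
  fix e assume "e \<in> absorber_slots k r r' j"
  then consider "e \<in> edge_slots_in (block k j)"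
    | x where "x \<in> block k j" "e = (min r x, max r x)"
    | x where "x \<in> block k j" "e = (min r' x, max r' x)"
    using block_parts(1,2)[OF k] unfolding absorber_slots_def by blast
  then show "e \<in> edge_slots n"
  proof cases
    case 1
    then show ?thesis using edge_slots_in_subset[OF assms(2)] by blast
  next
    case (2 x)
    then have "x < n" "x \<noteq> r" using assms(2,5) by auto
    then show ?thesis using 2 assms(3) unfolding edge_slots_def by (auto simp: min_def max_def)
  next
    case (3 x)
    then have "x < n" "x \<noteq> r'" using assms(2,6) by auto
    then show ?thesis using 3 assms(4) unfolding edge_slots_def by (auto simp: min_def max_def)
  qed
qed

lemma absorber_if_absorber_slots_present:
  assumes k: "1 \<le> k" and "r \<notin> block k j" "r' \<notin> block k j"
    and present: "\<forall>e\<in>absorber_slots k r r' j. G e"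
  shows "is_clique G (block k j) \<and>
    (\<forall>x\<in>block_left k j. adj G r x) \<and> (\<forall>x\<in>block_mid k j. adj G r' x)"
proof (intro conjI ballI)
  show "is_clique G (block k j)"
    using present by (intro is_clique_if_edge_slots_in) (simp add: absorber_slots_def)
next
  fix x assume "x \<in> block_left k j"
  then have "x \<noteq> r" "G (min r x, max r x)"
    using present assms(2) block_parts(1)[OF k] unfolding absorber_slots_def by auto
  then show "adj G r x" by (simp add: adj_def)
next
  fix x assume "x \<in> block_mid k j"
  then have "x \<noteq> r'" "G (min r' x, max r' x)"
    using present assms(3) block_parts(2)[OF k] unfolding absorber_slots_def by auto
  then show "adj G r' x" by (simp add: adj_def)
qed

lemma prob_no_absorber_le:
  assumes p: "0 \<le> p" "p \<le> 1" and k: "1 \<le> k" and "N * g * block_size k \<le> n"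
    and i: "i < N" and r: "r < n" "r \<notin> group_vertices k g i" and r': "r' < n" "r' \<notin> group_vertices k g i"
  shows "measure_pmf.prob (gnp n p) {G. \<not> (\<exists>j\<in>block_group g i. is_clique G (block k j) \<and>
      (\<forall>x\<in>block_left k j. adj G r x) \<and> (\<forall>x\<in>block_mid k j. adj G r' x))}
    \<le> (1 - p ^ (6 * k)\<^sup>2) ^ g"
proof -
  have outside: "r \<notin> block k j" "r' \<notin> block k j" if "j \<in> block_group g i" for j
    using r(2) r'(2) block_subset_group_vertices[OF that] by blast+
  have in_range: "block k j \<subseteq> {0..<n}" if "j \<in> block_group g i" for j
    using block_in_range[OF i that, of k] assms(4) by (auto simp: subset_iff)
  have "{G. \<not> (\<exists>j\<in>block_group g i. is_clique G (block k j) \<and>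
        (\<forall>x\<in>block_left k j. adj G r x) \<and> (\<forall>x\<in>block_mid k j. adj G r' x))}
      \<subseteq> {G. \<forall>j\<in>block_group g i. \<not> (\<forall>e\<in>absorber_slots k r r' j. G e)}"
    using absorber_if_absorber_slots_present[OF k outside] by blast
  then have "measure_pmf.prob (gnp n p) {G. \<not> (\<exists>j\<in>block_group g i. is_clique G (block k j) \<and>
        (\<forall>x\<in>block_left k j. adj G r x) \<and> (\<forall>x\<in>block_mid k j. adj G r' x))}
      \<le> measure_pmf.prob (gnp n p) {G. \<forall>j\<in>block_group g i. \<not> (\<forall>e\<in>absorber_slots k r r' j. G e)}"
    by (intro measure_pmf.finite_measure_mono) auto
  also have "\<dots> \<le> (1 - p ^ (6 * k)\<^sup>2) ^ card (block_group g i)"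
    unfolding gnp_def
  proof (rule prob_Pi_bernoulli_none_all_True_le[OF _ finite_edge_slots _ _ _ p])
    show "finite (block_group g i)" unfolding block_group_def chunk_def by simp
    show "\<forall>j\<in>block_group g i. absorber_slots k r r' j \<subseteq> edge_slots n"
      using absorber_slots_subset_edge_slots[OF k in_range r(1) r'(1) outside] by blast
    show "disjoint_family_on (absorber_slots k r r') (block_group g i)"
      using disjoint_absorber_slots[OF k] outside unfolding disjoint_family_on_def by blast
    show "\<forall>j\<in>block_group g i. card (absorber_slots k r r' j) \<le> (6 * k)\<^sup>2"
      using card_absorber_slots_le[OF k] by blast
  qed
  finally show ?thesis unfolding block_group_def chunk_def by simp
qed

lemma prob_not_absorbing_le:
  assumes p: "0 \<le> p" "p \<le> 1" and k: "1 \<le> k" and vol: "N * g * block_size k \<le> n"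
  shows "measure_pmf.prob (gnp n p) {G. \<not> absorbing G k g n N}
    \<le> real n * real n * real N * (1 - p ^ (6 * k)\<^sup>2) ^ g"
proof -
  define Idx where "Idx = {(r, r', i). r < n \<and> r' < n \<and> i < N \<and>
      r \<notin> group_vertices k g i \<and> r' \<notin> group_vertices k g i}"
  define E where "E = (\<lambda>(r, r', i). {G. \<not> (\<exists>j\<in>block_group g i. is_clique G (block k j) \<and>
      (\<forall>x\<in>block_left k j. adj G r x) \<and> (\<forall>x\<in>block_mid k j. adj G r' x))})"
  have "Idx \<subseteq> {..<n} \<times> {..<n} \<times> {..<N}" unfolding Idx_def by auto
  then have "finite Idx" "card Idx \<le> n * n * N"
    using card_mono[of "{..<n} \<times> {..<n} \<times> {..<N}" Idx]
    by (auto intro: finite_subset simp: card_cartesian_product)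
  have "{G. \<not> absorbing G k g n N} \<subseteq> (\<Union>t\<in>Idx. E t)"
  proof
    fix G assume "G \<in> {G. \<not> absorbing G k g n N}"
    then obtain r r' i where "(r, r', i) \<in> Idx" "G \<in> E (r, r', i)"
      unfolding absorbing_def Idx_def E_def by auto
    then show "G \<in> (\<Union>t\<in>Idx. E t)" by blast
  qed
  then have "measure_pmf.prob (gnp n p) {G. \<not> absorbing G k g n N}
      \<le> measure_pmf.prob (gnp n p) (\<Union>t\<in>Idx. E t)"
    by (intro measure_pmf.finite_measure_mono) auto
  also have "\<dots> \<le> card Idx * (1 - p ^ (6 * k)\<^sup>2) ^ g"
    using prob_no_absorber_le[OF p k vol] \<open>finite Idx\<close>
    by (intro measure_pmf_prob_UN_le) (auto simp: Idx_def E_def)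
  also have "\<dots> \<le> real n * real n * real N * (1 - p ^ (6 * k)\<^sup>2) ^ g"
    using \<open>card Idx \<le> n * n * N\<close> p
    by (intro mult_right_mono) (auto simp: power_le_one simp flip: of_nat_mult)
  finally show ?thesis .
qed

text \<open>Lines with \<open>P = 2k m\<^sup>1\<^sup>1\<close> rows and \<open>D = m\<^sup>1\<^sup>1\<close> slopes satisfy \<open>D * 2k \<le> P\<close>, so every set of
  \<open>T = P * 2k\<close> vertices offers \<open>P * D = 2k m\<^sup>2\<^sup>2\<close> edge-disjoint candidate cliques.\<close>

lemma prob_clique_cover_ge:
  assumes p: "0 \<le> p" "p \<le> 1" and k: "1 \<le> k" and m: "1 \<le> m"
    and vol: "(4 * k\<^sup>2 * m ^ 11 + 3) * m ^ 4 * block_size k \<le> n"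
  shows "1 - (2 ^ n * (1 - p ^ (2 * k)\<^sup>2) ^ (2 * k * m ^ 22)
      + real n * real n * real (4 * k\<^sup>2 * m ^ 11 + 3) * (1 - p ^ (6 * k)\<^sup>2) ^ (m ^ 4))
    \<le> measure_pmf.prob (gnp n p) {G. \<exists>F. clique_cover G (2 * k) (6 * k) F {0..<n}}"
proof -
  define P where "P = 2 * k * m ^ 11"
  define N where "N = 4 * k\<^sup>2 * m ^ 11 + 3"
  have PT: "P * (2 * k) + 3 = N" "P * m ^ 11 = 2 * k * m ^ 22"
    unfolding P_def N_def by (simp_all add: power2_eq_square power_add[symmetric])
  let ?S = "{G. \<exists>F. clique_cover G (2 * k) (6 * k) F {0..<n}}"
  let ?F1 = "{G. \<not> cliques_in_large_sets G {0..<n} (P * (2 * k)) (2 * k)}"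
  let ?F2 = "{G. \<not> absorbing G k (m ^ 4) n N}"
  have "UNIV - ?S \<subseteq> ?F1 \<union> ?F2"
    using clique_cover_exists[OF k, of G n "P * (2 * k)" "m ^ 4" N for G] vol PT(1)
    by (auto simp: N_def mult.assoc)
  then have "measure_pmf.prob (gnp n p) (UNIV - ?S) \<le> measure_pmf.prob (gnp n p) (?F1 \<union> ?F2)"
    by (intro measure_pmf.finite_measure_mono) auto
  also have "\<dots> \<le> measure_pmf.prob (gnp n p) ?F1 + measure_pmf.prob (gnp n p) ?F2"
    by (rule measure_Un_le) auto
  also have "\<dots> \<le> 2 ^ n * (1 - p ^ (2 * k)\<^sup>2) ^ (2 * k * m ^ 22)
      + real n * real n * real N * (1 - p ^ (6 * k)\<^sup>2) ^ (m ^ 4)"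
    using prob_not_cliques_in_large_sets_le[OF p, of P "m ^ 11" "2 * k" n]
      prob_not_absorbing_le[OF p k, of N "m ^ 4" n] k m vol PT(2)
    by (intro add_mono) (auto simp: P_def N_def mult.assoc)
  finally show ?thesis
    using measure_pmf.prob_compl[of ?S "gnp n p"] unfolding N_def by (simp add: Compl_eq_Diff_UNIV)
qed

section \<open>Asymptotics\<close>

lemma one_minus_power_le_exp:
  fixes q x :: real
  assumes "0 \<le> x" "x \<le> q" "q \<le> 1" "0 \<le> a" "a \<le> real M"
  shows "(1 - q) ^ M \<le> exp (- (x * a))"
proof -
  have "(1 - q) ^ M \<le> exp (- q) ^ M"
    using exp_ge_add_one_self[of "- q"] assms by (intro power_mono) auto
  also have "\<dots> = exp (- (q * real M))" by (simp add: exp_of_nat_mult[symmetric] algebra_simps)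
  also have "\<dots> \<le> exp (- (x * a))" using assms by (auto intro: mult_mono)
  finally show ?thesis .
qed

lemma nat_floor_bounds:
  fixes y :: real assumes "1 \<le> y"
  shows "y / 2 \<le> real (nat \<lfloor>y\<rfloor>)" "real (nat \<lfloor>y\<rfloor>) \<le> y" "1 \<le> nat \<lfloor>y\<rfloor>"
proof -
  have "1 \<le> \<lfloor>y\<rfloor>" using assms by linarith
  then have "real (nat \<lfloor>y\<rfloor>) = real_of_int \<lfloor>y\<rfloor>" by simp
  then show "y / 2 \<le> real (nat \<lfloor>y\<rfloor>)" "real (nat \<lfloor>y\<rfloor>) \<le> y" "1 \<le> nat \<lfloor>y\<rfloor>"
    using \<open>1 \<le> \<lfloor>y\<rfloor>\<close> by linarith+
qed

lemma nat_ceiling_bounds: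
  fixes L :: real assumes "1 \<le> L"
  shows "L \<le> real (nat \<lceil>L\<rceil>)" "real (nat \<lceil>L\<rceil>) \<le> L + 1" "1 \<le> nat \<lceil>L\<rceil>"
proof -
  have "1 \<le> \<lceil>L\<rceil>" using assms by linarith
  then have "real (nat \<lceil>L\<rceil>) = real_of_int \<lceil>L\<rceil>" by simp
  then show "L \<le> real (nat \<lceil>L\<rceil>)" "real (nat \<lceil>L\<rceil>) \<le> L + 1" "1 \<le> nat \<lceil>L\<rceil>"
    using \<open>1 \<le> \<lceil>L\<rceil>\<close> by linarith+
qed

lemma volume_condition:
  fixes L y :: real
  assumes k: "1 \<le> k" "real k \<le> L + 1" and m: "1 \<le> y" "real m \<le> y"
    and vol: "(4 * (L + 1)\<^sup>2 * y ^ 11 + 3) * y ^ 4 * (6 * (L + 1)) \<le> real n"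
  shows "(4 * k\<^sup>2 * m ^ 11 + 3) * m ^ 4 * block_size k \<le> n"
proof -
  have "real ((4 * k\<^sup>2 * m ^ 11 + 3) * m ^ 4 * block_size k)
      = (4 * real k ^ 2 * real m ^ 11 + 3) * real m ^ 4 * (6 * real k - 2)"
    using k(1) by (simp add: block_size_def of_nat_diff)
  also have "\<dots> \<le> (4 * (L + 1)\<^sup>2 * y ^ 11 + 3) * y ^ 4 * (6 * (L + 1))"
  proof -
    have "real k ^ 2 \<le> (L + 1)\<^sup>2" "real m ^ 11 \<le> y ^ 11" "real m ^ 4 \<le> y ^ 4"
      using k m by (auto intro: power_mono)
    then have "4 * real k ^ 2 * real m ^ 11 \<le> 4 * (L + 1)\<^sup>2 * y ^ 11"
      by (intro mult_left_mono mult_mono) auto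
    then have a: "(4 * real k ^ 2 * real m ^ 11 + 3) * real m ^ 4 \<le> (4 * (L + 1)\<^sup>2 * y ^ 11 + 3) * y ^ 4"
      using \<open>real m ^ 4 \<le> y ^ 4\<close> m(1) by (intro mult_mono) auto
    have c: "0 \<le> 6 * real k - 2" "6 * real k - 2 \<le> 6 * (L + 1)" using k by auto
    show ?thesis by (rule mult_mono[OF a c(2)]) (use m(1) c(1) in auto)
  qed
  also have "\<dots> \<le> real n" by (rule vol)
  finally show ?thesis by (simp only: of_nat_le_iff)
qed

lemma p_power_lower_bound:
  fixes p L :: real
  assumes p: "0 < p" "p \<le> 1" and L: "1 \<le> L" "14400 * (- ln p) \<le> L" and k: "real k \<le> L + 1"
  shows "exp (- (L ^ 3 / 100)) \<le> p ^ (6 * k)\<^sup>2"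
proof -
  have "real ((6 * k)\<^sup>2) = 36 * real k ^ 2" by (simp add: power2_eq_square)
  also have "\<dots> \<le> 36 * (L + 1)\<^sup>2" using k by (intro mult_left_mono power_mono) auto
  also have "\<dots> \<le> 36 * (2 * L)\<^sup>2" using L(1) by (intro mult_left_mono power_mono) auto
  also have "\<dots> = 144 * L\<^sup>2" by (simp add: power2_eq_square)
  finally have "real ((6 * k)\<^sup>2) * (- ln p) \<le> 144 * L\<^sup>2 * (L / 14400)"
    using L p by (intro mult_mono) auto
  then have "- (L ^ 3 / 100) \<le> real ((6 * k)\<^sup>2) * ln p"
    by (simp add: power3_eq_cube power2_eq_square algebra_simps)
  then show ?thesis using p(1) by (simp add: exp_of_nat_mult[symmetric] powr_realpow[symmetric]
      powr_def mult.commute)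
qed

definition clique_partition_event :: "real \<Rightarrow> real \<Rightarrow> nat \<Rightarrow> (nat \<times> nat \<Rightarrow> bool) set" where
  "clique_partition_event c1 c2 n = {G. \<exists>Vs. is_partition n Vs \<and>
     (\<forall>i<length Vs.
        is_clique G (Vs ! i) \<and>
        c1 * ln (real n) powr (1/3) \<le> real (card (Vs ! i)) \<and>
        real (card (Vs ! i)) \<le> c2 * ln (real n) powr (1/3) \<and>
        (i < length Vs - 1 \<longrightarrow> even (card (Vs ! i))))}"

lemma clique_cover_in_clique_partition_event:
  assumes "clique_cover G (2 * k) (6 * k) F {0..<n}"
    and "1 \<le> ln (real n) powr (1/3)" "ln (real n) powr (1/3) \<le> real k" "real k \<le> ln (real n) powr (1/3) + 1"
  shows "G \<in> clique_partition_event 1 12 n"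
proof -
  obtain Vs where "is_partition n Vs" and Vs: "\<forall>i<length Vs. is_clique G (Vs ! i) \<and>
      2 * k \<le> card (Vs ! i) \<and> card (Vs ! i) \<le> 6 * k \<and> (i < length Vs - 1 \<longrightarrow> even (card (Vs ! i)))"
    using clique_cover_imp_partition[OF assms(1)] by blast
  moreover have "1 * ln (real n) powr (1/3) \<le> real (card (Vs ! i))"
    "real (card (Vs ! i)) \<le> 12 * ln (real n) powr (1/3)" if "i < length Vs" for i
    using Vs that assms(2-4) by (fastforce dest!: spec[of _ i] simp flip: of_nat_le_iff)+
  ultimately show ?thesis unfolding clique_partition_event_def by blast
qed

definition failure_bound :: "nat \<Rightarrow> real" where
  "failure_bound n = exp (real n * ln 2 - real n powr (-1/100) * (real n powr (1/20) / 2) ^ 22)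
     + real n ^ 3 * exp (- (real n powr (-1/100) * (real n powr (1/20) / 2) ^ 4))"

lemma failure_terms_le:
  fixes p x y :: real
  assumes p: "0 < p" "p \<le> 1" and x: "0 \<le> x" "x \<le> p ^ (6 * k)\<^sup>2"
    and "1 \<le> k" "1 \<le> y" "y / 2 \<le> real m" and N: "4 * k\<^sup>2 * m ^ 11 + 3 \<le> n"
  shows "2 ^ n * (1 - p ^ (2 * k)\<^sup>2) ^ (2 * k * m ^ 22)
      + real n * real n * real (4 * k\<^sup>2 * m ^ 11 + 3) * (1 - p ^ (6 * k)\<^sup>2) ^ (m ^ 4)
    \<le> exp (real n * ln 2 - x * (y / 2) ^ 22) + real n ^ 3 * exp (- (x * (y / 2) ^ 4))"
proof (rule add_mono)
  have "(y / 2) ^ 22 \<le> real m ^ 22" using assms(6,7) by (intro power_mono) auto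
  also have "\<dots> \<le> real (2 * k * m ^ 22)"
    using mult_right_mono[of 1 "2 * real k" "real m ^ 22"] assms(5) by simp
  finally have "(y / 2) ^ 22 \<le> real (2 * k * m ^ 22)" .
  moreover have "p ^ (6 * k)\<^sup>2 \<le> p ^ (2 * k)\<^sup>2" using p by (intro power_decreasing) (auto simp: power2_eq_square)
  ultimately have "(1 - p ^ (2 * k)\<^sup>2) ^ (2 * k * m ^ 22) \<le> exp (- (x * (y / 2) ^ 22))"
    using x p assms(6) by (intro one_minus_power_le_exp) (auto simp: power_le_one)
  then have "2 ^ n * (1 - p ^ (2 * k)\<^sup>2) ^ (2 * k * m ^ 22) \<le> 2 ^ n * exp (- (x * (y / 2) ^ 22))"
    by (intro mult_left_mono) auto
  also have "\<dots> = exp (real n * ln 2) * exp (- (x * (y / 2) ^ 22))"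
    by (subst exp_of_nat_mult) simp
  also have "\<dots> = exp (real n * ln 2 - x * (y / 2) ^ 22)" by (simp add: exp_add[symmetric])
  finally show "2 ^ n * (1 - p ^ (2 * k)\<^sup>2) ^ (2 * k * m ^ 22) \<le> exp (real n * ln 2 - x * (y / 2) ^ 22)" .
next
  have "real (4 * k\<^sup>2 * m ^ 11 + 3) \<le> real n" using N by (simp only: of_nat_le_iff)
  then have "real n * real n * real (4 * k\<^sup>2 * m ^ 11 + 3) \<le> real n ^ 3"
    by (simp add: power3_eq_cube mult_left_mono)
  moreover have "(1 - p ^ (6 * k)\<^sup>2) ^ (m ^ 4) \<le> exp (- (x * (y / 2) ^ 4))"
    using x p assms(6,7) power_mono[of "y / 2" "real m" 4] by (intro one_minus_power_le_exp) (auto simp: power_le_one)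
  ultimately show "real n * real n * real (4 * k\<^sup>2 * m ^ 11 + 3) * (1 - p ^ (6 * k)\<^sup>2) ^ (m ^ 4)
      \<le> real n ^ 3 * exp (- (x * (y / 2) ^ 4))"
    using p by (intro mult_mono) (auto simp: power_le_one)
qed

text \<open>With \<open>k = \<lceil>L\<rceil>\<close> for \<open>L = ln n powr (1/3)\<close> and \<open>m = \<lfloor>n powr (1/20)\<rfloor>\<close>, the clique
  probabilities \<open>p ^ (6k)\<^sup>2\<close> stay above \<open>n powr (-1/100)\<close> as soon as \<open>L \<ge> 14400 ln (1/p)\<close>.\<close>

lemma prob_clique_partition_event_ge:
  fixes p :: real
  assumes p: "0 < p" "p \<le> 1" and n: "2 \<le> real n"
    and L: "1 \<le> ln (real n) powr (1/3)" "14400 * (- ln p) \<le> ln (real n) powr (1/3)"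
    and vol: "(4 * (ln (real n) powr (1/3) + 1)\<^sup>2 * (real n powr (1/20)) ^ 11 + 3)
      * (real n powr (1/20)) ^ 4 * (6 * (ln (real n) powr (1/3) + 1)) \<le> real n"
  shows "1 - failure_bound n \<le> measure_pmf.prob (gnp n p) (clique_partition_event 1 12 n)"
proof -
  define L where "L = ln (real n) powr (1/3)"
  define y where "y = real n powr (1/20)"
  define x where "x = real n powr (-1/100)"
  define k where "k = nat \<lceil>L\<rceil>"
  define m where "m = nat \<lfloor>y\<rfloor>"
  have y: "1 \<le> y" unfolding y_def using n by (intro ge_one_powr_ge_zero) auto
  note k = nat_ceiling_bounds[OF L(1)[folded L_def], folded k_def]
  note m = nat_floor_bounds[OF y, folded m_def]
  have N: "(4 * k\<^sup>2 * m ^ 11 + 3) * m ^ 4 * block_size k \<le> n"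
    by (rule volume_condition[OF k(3,2) y m(2)]) (use vol in \<open>simp add: L_def y_def\<close>)
  have "1 \<le> m ^ 4 * block_size k" using k(3) m(3) by (simp add: block_size_def)
  then have "4 * k\<^sup>2 * m ^ 11 + 3 \<le> (4 * k\<^sup>2 * m ^ 11 + 3) * (m ^ 4 * block_size k)" by simp
  also have "\<dots> \<le> n" using N by (simp only: mult.assoc)
  finally have count: "4 * k\<^sup>2 * m ^ 11 + 3 \<le> n" .
  have "L ^ 3 = ln (real n)"
    unfolding L_def using n by (simp add: powr_realpow[symmetric] powr_powr)
  then have "exp (- (L ^ 3 / 100)) = x" unfolding x_def using n by (simp add: powr_def)
  then have x: "0 \<le> x" "x \<le> p ^ (6 * k)\<^sup>2"
    using p_power_lower_bound[OF p L(1,2)[folded L_def] k(2)] unfolding x_def by auto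
  have failure: "2 ^ n * (1 - p ^ (2 * k)\<^sup>2) ^ (2 * k * m ^ 22)
      + real n * real n * real (4 * k\<^sup>2 * m ^ 11 + 3) * (1 - p ^ (6 * k)\<^sup>2) ^ (m ^ 4)
    \<le> failure_bound n"
    using failure_terms_le[OF p x k(3) y m(1) count] by (simp only: failure_bound_def x_def y_def)
  have "{G. \<exists>F. clique_cover G (2 * k) (6 * k) F {0..<n}} \<subseteq> clique_partition_event 1 12 n"
    using clique_cover_in_clique_partition_event L(1) k(1,2) unfolding L_def by blast
  then have "measure_pmf.prob (gnp n p) {G. \<exists>F. clique_cover G (2 * k) (6 * k) F {0..<n}}
      \<le> measure_pmf.prob (gnp n p) (clique_partition_event 1 12 n)"
    by (intro measure_pmf.finite_measure_mono) auto
  then show ?thesis using prob_clique_cover_ge[OF _ p(2) k(3) m(3) N] p(1) failure by linarith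
qed

theorem theorem2p1:
  fixes p :: real
  assumes "0 < p" and "p \<le> 1"
  shows "\<exists>c1 c2 :: real. 0 < c1 \<and> 0 < c2 \<and>
    ((\<lambda>n. measure_pmf.prob (gnp n p)
        {G. \<exists>Vs. is_partition n Vs \<and>
              (\<forall>i<length Vs.
                 is_clique G (Vs ! i) \<and>
                 c1 * ln (real n) powr (1/3) \<le> real (card (Vs ! i)) \<and>
                 real (card (Vs ! i)) \<le> c2 * ln (real n) powr (1/3) \<and>
                 (i < length Vs - 1 \<longrightarrow> even (card (Vs ! i))))})
     \<longlonglongrightarrow> 1)"
proof -
  have "filterlim (\<lambda>n::nat. ln (real n) powr (1/3)) at_top sequentially" by real_asymp
  then have "eventually (\<lambda>n::nat. max 1 (14400 * (- ln p)) \<le> ln (real n) powr (1/3)) sequentially"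
    unfolding filterlim_at_top by blast
  moreover have "eventually (\<lambda>n::nat.
      (4 * (ln (real n) powr (1/3) + 1)\<^sup>2 * (real n powr (1/20)) ^ 11 + 3)
        * (real n powr (1/20)) ^ 4 * (6 * (ln (real n) powr (1/3) + 1)) \<le> real n) sequentially"
    by real_asymp
  moreover have "eventually (\<lambda>n::nat. 2 \<le> real n) sequentially" by real_asymp
  ultimately have lower: "eventually (\<lambda>n. 1 - failure_bound n
      \<le> measure_pmf.prob (gnp n p) (clique_partition_event 1 12 n)) sequentially"
    by eventually_elim (rule prob_clique_partition_event_ge[OF assms]; simp)
  have upper: "eventually (\<lambda>n. measure_pmf.prob (gnp n p) (clique_partition_event 1 12 n) \<le> 1) sequentially"
    by (simp add: measure_pmf.prob_le_1)
  have "failure_bound \<longlonglongrightarrow> 0" unfolding failure_bound_def[abs_def] by real_asymp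
  then have "(\<lambda>n. 1 - failure_bound n) \<longlonglongrightarrow> 1 - 0" by (intro tendsto_intros)
  then have "(\<lambda>n. measure_pmf.prob (gnp n p) (clique_partition_event 1 12 n)) \<longlonglongrightarrow> 1"
    using tendsto_sandwich[OF lower upper] by simp
  then show ?thesis
    unfolding clique_partition_event_def by (intro exI[of _ "1::real"] exI[of _ "12::real"] conjI) simp_all
qed

end
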